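(* Let $c^1,\ldots,c^M$ and $s^1,\ldots,s^M$ be sequences of customer and server types whose FCFS matching $A$ is perfect. Define the exchanged sequences by $\tilde{s}^m=s^n$ and $\tilde{c}^n=c^m$ for each $(m,n)\in A$, and let $\tilde{A}=\{(n,m):(m,n)\in A\}$ (pairing $\tilde{c}^n$ with $\tilde{s}^m$). Then $\tilde{A}$ is the unique complete FCFS matching of $(\tilde{c}^n)_{n=1}^M$ and $(\tilde{s}^m)_{m=1}^M$ in reversed time, i.e. with respect to the reversed order of indices $M,M-1,\ldots,1$: for every $(n,m)\in\tilde{A}$, each $k>m$ with $(\tilde{c}^n,\tilde{s}^k)\in\mathcal{E}$ satisfies $(l,k)\in\tilde{A}$ for some $l>n$, and each $l>n$ with $(\tilde{c}^l,\tilde{s}^m)\in\mathcal{E}$ satisfies $(l,k)\in\tilde{A}$ for some $k>m$.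
   Context: Let $\mathcal{C}$ and $\mathcal{S}$ be finite sets of customer and server types and $G=(\mathcal{C},\mathcal{S},\mathcal{E})$ a connected bipartite compatibility graph. The FCFS matching of finite sequences $(c^m)$, $(s^n)$ is the unique set $A$ of index pairs with $(m,n)\in A\Rightarrow(c^m,s^n)\in\mathcal{E}$, each index in at most one pair, no unmatched compatible pair left, and such that for every $(m,n)\in A$, every $l<n$ with $(c^m,s^l)\in\mathcal{E}$ is matched to some $k<m$ and every $k<m$ with $(c^k,s^n)\in\mathcal{E}$ is matched to some $l<n$. It is perfect if every customer and every server is matched. *)

theory Defs
  imports Main
begin

definition bip_connected :: "('c \<times> 's) set \<Rightarrow> bool" where
  "bip_connected E \<longleftrightarrow>
     (\<forall>u v :: 'c + 's. (u, v) \<in> ({(Inl a, Inr b) | a b. (a, b) \<in> E}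
                                \<union> {(Inr b, Inl a) | a b. (a, b) \<in> E})\<^sup>*)"

definition is_matching ::
  "('c \<times> 's) set \<Rightarrow> nat \<Rightarrow> nat \<Rightarrow> (nat \<Rightarrow> 'c) \<Rightarrow> (nat \<Rightarrow> 's) \<Rightarrow> (nat \<times> nat) set \<Rightarrow> bool" where
  "is_matching E M N c s A \<longleftrightarrow>
     A \<subseteq> {1..M} \<times> {1..N} \<and>
     (\<forall>(m, n) \<in> A. (c m, s n) \<in> E) \<and>
     (\<forall>m n n'. (m, n) \<in> A \<longrightarrow> (m, n') \<in> A \<longrightarrow> n = n') \<and>
     (\<forall>m m' n. (m, n) \<in> A \<longrightarrow> (m', n) \<in> A \<longrightarrow> m = m') \<and>
     (\<forall>m \<in> {1..M}. \<forall>n \<in> {1..N}. (c m, s n) \<in> E \<longrightarrow>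
        (\<exists>n'. (m, n') \<in> A) \<or> (\<exists>m'. (m', n) \<in> A))"

definition fcfs_matching_wrt ::
  "(nat \<Rightarrow> nat \<Rightarrow> bool) \<Rightarrow> ('c \<times> 's) set \<Rightarrow> nat \<Rightarrow> nat \<Rightarrow> (nat \<Rightarrow> 'c) \<Rightarrow> (nat \<Rightarrow> 's)
     \<Rightarrow> (nat \<times> nat) set \<Rightarrow> bool" where
  "fcfs_matching_wrt before E M N c s A \<longleftrightarrow>
     is_matching E M N c s A \<and>
     (\<forall>(m, n) \<in> A.
        (\<forall>l \<in> {1..N}. before l n \<longrightarrow> (c m, s l) \<in> E \<longrightarrow> (\<exists>k. before k m \<and> (k, l) \<in> A)) \<and>
        (\<forall>k \<in> {1..M}. before k m \<longrightarrow> (c k, s n) \<in> E \<longrightarrow> (\<exists>l. before l n \<and> (k, l) \<in> A)))"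

abbreviation fcfs_matching where
  "fcfs_matching \<equiv> fcfs_matching_wrt (<)"

abbreviation fcfs_matching_rev where
  "fcfs_matching_rev \<equiv> fcfs_matching_wrt (>)"

definition perfect_matching :: "nat \<Rightarrow> nat \<Rightarrow> (nat \<times> nat) set \<Rightarrow> bool" where
  "perfect_matching M N A \<longleftrightarrow>
     (\<forall>m \<in> {1..M}. \<exists>n. (m, n) \<in> A) \<and> (\<forall>n \<in> {1..N}. \<exists>m. (m, n) \<in> A)"

end

theory Submission
  imports Defs
begin

text \<open>In an FCFS matching, if customer \<open>m\<close> is served by \<open>n\<close> and a later customer \<open>l\<close> is
  served by a server \<open>n'\<close> compatible with \<open>m\<close>, then \<open>n' > n\<close>: an earlier \<open>n'\<close> would have
  gone to a customer before \<open>m\<close>. Exchanging the types along the matching turns exactly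
  this fact into the reversed-time FCFS conditions for the converse matching (the
  compatibility of the exchanged types is that of the original pairs). Uniqueness in
  reversed time holds for any two reversed FCFS matchings: a pair in one but not the
  other forces a discrepancy at a pair that is componentwise later, which cannot go on
  forever among bounded indices.\<close>

lemma is_matching_converse:
  "is_matching E M N c s A \<Longrightarrow> is_matching (E\<inverse>) N M s c (A\<inverse>)"
  unfolding is_matching_def by blast

lemma fcfs_matching_wrt_converse:
  "fcfs_matching_wrt before E M N c s A \<Longrightarrow> fcfs_matching_wrt before (E\<inverse>) N M s c (A\<inverse>)"
  unfolding fcfs_matching_wrt_def using is_matching_converse by fastforce

lemma fcfs_matching_later_partner_later:
  assumes fcfs: "fcfs_matching E M N c s A"
    and mn: "(m, n) \<in> A" and ln': "(l, n') \<in> A" and "m < l" and edge: "(c m, s n') \<in> E"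
  shows "n < n'"
proof -
  have match: "is_matching E M N c s A" and
    earlier_server: "\<And>l'. l' \<in> {1..N} \<Longrightarrow> l' < n \<Longrightarrow> (c m, s l') \<in> E \<Longrightarrow> \<exists>k<m. (k, l') \<in> A"
    using fcfs mn unfolding fcfs_matching_wrt_def by fast+
  have "n' \<in> {1..N}" using match ln' unfolding is_matching_def by blast
  have "n' \<noteq> n" using match mn ln' \<open>m < l\<close> unfolding is_matching_def by blast
  moreover have "\<not> n' < n"
  proof
    assume "n' < n"
    then obtain k where "k < m" "(k, n') \<in> A" using earlier_server \<open>n' \<in> {1..N}\<close> edge by blast
    with ln' match have "k = l" unfolding is_matching_def by blast
    with \<open>k < m\<close> \<open>m < l\<close> show False by simp
  qed
  ultimately show ?thesis by simp
qed

lemma exchanged_is_matching: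
  assumes match: "is_matching E M N c s A" and perf: "perfect_matching M N A"
    and exch: "\<forall>(m, n) \<in> A. st m = s n \<and> ct n = c m"
  shows "is_matching E N M ct st (A\<inverse>)"
proof -
  have "(ct n, st m) \<in> E" if "(m, n) \<in> A" for m n
    using match exch that unfolding is_matching_def by (metis (mono_tags) case_prodD)
  moreover have "A\<inverse> \<subseteq> {1..N} \<times> {1..M}"
    "\<forall>n m m'. (n, m) \<in> A\<inverse> \<longrightarrow> (n, m') \<in> A\<inverse> \<longrightarrow> m = m'"
    "\<forall>n n' m. (n, m) \<in> A\<inverse> \<longrightarrow> (n', m) \<in> A\<inverse> \<longrightarrow> n = n'"
    using match unfolding is_matching_def by blast+
  moreover have "\<forall>n \<in> {1..N}. \<exists>m. (n, m) \<in> A\<inverse>"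
    using perf unfolding perfect_matching_def by blast
  ultimately show ?thesis
    unfolding is_matching_def by blast
qed

lemma exchanged_fcfs_matching_rev:
  assumes fcfs: "fcfs_matching E M N c s A" and perf: "perfect_matching M N A"
    and exch: "\<forall>(m, n) \<in> A. st m = s n \<and> ct n = c m"
  shows "fcfs_matching_rev E N M ct st (A\<inverse>)"
proof -
  have match: "is_matching E M N c s A" using fcfs unfolding fcfs_matching_wrt_def by blast
  have fcfs_conv: "fcfs_matching (E\<inverse>) N M s c (A\<inverse>)" using fcfs_matching_wrt_converse[OF fcfs] .
  have later_server: "\<exists>k>n. (l, k) \<in> A"
    if "(m, n) \<in> A" "l \<in> {1..M}" "m < l" "(ct n, st l) \<in> E" for m n l
  proof -
    obtain n' where "(l, n') \<in> A" using perf \<open>l \<in> {1..M}\<close> unfolding perfect_matching_def by blast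
    with that exch have "(c m, s n') \<in> E" by (metis (mono_tags) case_prodD)
    with fcfs_matching_later_partner_later[OF fcfs] that \<open>(l, n') \<in> A\<close> show ?thesis by blast
  qed
  have later_customer: "\<exists>l>m. (l, k) \<in> A"
    if "(m, n) \<in> A" "k \<in> {1..N}" "n < k" "(ct k, st m) \<in> E" for m n k
  proof -
    obtain l where "(l, k) \<in> A" using perf \<open>k \<in> {1..N}\<close> unfolding perfect_matching_def by blast
    with that exch have "(s n, c l) \<in> E\<inverse>" by (metis (mono_tags) case_prodD converse_iff)
    with fcfs_matching_later_partner_later[OF fcfs_conv] that \<open>(l, k) \<in> A\<close> show ?thesis by blast
  qed
  show ?thesis
    unfolding fcfs_matching_wrt_def
    using exchanged_is_matching[OF match perf exch] later_server later_customer by fast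
qed

lemma fcfs_matching_rev_discrepancy_at_customer:
  assumes B: "fcfs_matching_rev E M N c s B" and B': "fcfs_matching_rev E M N c s B'"
    and mn: "(m, n) \<in> B - B'" and ml: "(m, l) \<in> B'"
  obtains m' n' where "(m', n') \<in> (B - B') \<union> (B' - B)"
    "m \<le> m'" "n \<le> n'" "(m', n') \<noteq> (m, n)"
proof -
  note match = B[unfolded fcfs_matching_wrt_def is_matching_def, THEN conjunct1]
    and match' = B'[unfolded fcfs_matching_wrt_def is_matching_def, THEN conjunct1]
  note fcfs = B[unfolded fcfs_matching_wrt_def, THEN conjunct2]
    and fcfs' = B'[unfolded fcfs_matching_wrt_def, THEN conjunct2]
  have "l \<noteq> n" using mn ml by auto
  then consider "n < l" | "l < n" by linarith
  then show thesis
  proof cases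
    case 1
    have "l \<in> {1..N}" "(c m, s l) \<in> E" using match' ml by auto
    with 1 obtain k where "m < k" "(k, l) \<in> B" using fcfs mn by fastforce
    moreover have "(k, l) \<notin> B'" using match' ml \<open>m < k\<close> by (metis less_irrefl)
    ultimately show thesis using that[of k l] 1 by auto
  next
    case 2
    have "n \<in> {1..N}" "(c m, s n) \<in> E" using match mn by auto
    with 2 obtain k where "m < k" "(k, n) \<in> B'" using fcfs' ml by fastforce
    moreover have "(k, n) \<notin> B" using match mn \<open>m < k\<close> by (metis DiffD1 less_irrefl)
    ultimately show thesis using that[of k n] by auto
  qed
qed

text \<open>A server-side discrepancy is a customer-side one after swapping the roles of
  customers and servers.\<close>

lemma fcfs_matching_rev_discrepancy_later:
  assumes B: "fcfs_matching_rev E M N c s B" and B': "fcfs_matching_rev E M N c s B'"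
    and mn: "(m, n) \<in> B - B'"
  obtains m' n' where "(m', n') \<in> (B - B') \<union> (B' - B)"
    "m \<le> m'" "n \<le> n'" "(m', n') \<noteq> (m, n)"
proof -
  have "m \<in> {1..M}" "n \<in> {1..N}" "(c m, s n) \<in> E"
    using B mn unfolding fcfs_matching_wrt_def is_matching_def by auto
  then consider l where "(m, l) \<in> B'" | k where "(k, n) \<in> B'"
    using B' unfolding fcfs_matching_wrt_def is_matching_def by blast
  then show thesis
  proof cases
    case 1
    with fcfs_matching_rev_discrepancy_at_customer[OF B B' mn] that show thesis by blast
  next
    case (2 k)
    have "(n, m) \<in> B\<inverse> - B'\<inverse>" "(n, k) \<in> B'\<inverse>" using mn 2 by auto
    from fcfs_matching_rev_discrepancy_at_customer[OF
        fcfs_matching_wrt_converse[OF B] fcfs_matching_wrt_converse[OF B'] this]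
    obtain n' m' where "(n', m') \<in> (B\<inverse> - B'\<inverse>) \<union> (B'\<inverse> - B\<inverse>)"
      "n \<le> n'" "m \<le> m'" "(n', m') \<noteq> (n, m)" .
    with that[of m' n'] show thesis by auto
  qed
qed

lemma fcfs_matching_rev_unique:
  assumes B: "fcfs_matching_rev E M N c s B" and B': "fcfs_matching_rev E M N c s B'"
  shows "B = B'"
proof -
  have bounded: "(m, n) \<in> B \<union> B' \<Longrightarrow> m \<le> M \<and> n \<le> N" for m n
    using B B' unfolding fcfs_matching_wrt_def is_matching_def by auto
  have "(m, n) \<notin> (B - B') \<union> (B' - B)" for m n
  proof (induction "(M - m) + (N - n)" arbitrary: m n rule: less_induct)
    case less
    show ?case
    proof
      assume "(m, n) \<in> (B - B') \<union> (B' - B)"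
      then obtain m' n' where later: "(m', n') \<in> (B - B') \<union> (B' - B)"
        "m \<le> m'" "n \<le> n'" "(m', n') \<noteq> (m, n)"
        using fcfs_matching_rev_discrepancy_later[OF B B'] fcfs_matching_rev_discrepancy_later[OF B' B]
        by (metis Un_iff Un_commute)
      with bounded have "(M - m') + (N - n') < (M - m) + (N - n)" by fastforce
      with less later(1) show False by blast
    qed
  qed
  then show ?thesis by auto
qed

theorem lemma4p1:
  fixes E :: "('c::finite \<times> 's::finite) set"
    and M :: nat
    and c ct :: "nat \<Rightarrow> 'c"
    and s st :: "nat \<Rightarrow> 's"
    and A :: "(nat \<times> nat) set"
  assumes conn: "bip_connected E"
    and fcfs: "fcfs_matching E M M c s A"
    and perf: "perfect_matching M M A"
    and exch: "\<forall>(m, n) \<in> A. st m = s n \<and> ct n = c m"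
  shows "fcfs_matching_rev E M M ct st (A\<inverse>) \<and> perfect_matching M M (A\<inverse>) \<and>
         (\<forall>B. fcfs_matching_rev E M M ct st B \<longrightarrow> B = A\<inverse>)"
proof -
  have rev: "fcfs_matching_rev E M M ct st (A\<inverse>)"
    using exchanged_fcfs_matching_rev[OF fcfs perf exch] .
  moreover have "perfect_matching M M (A\<inverse>)"
    using perf unfolding perfect_matching_def by blast
  moreover have "\<forall>B. fcfs_matching_rev E M M ct st B \<longrightarrow> B = A\<inverse>"
    using fcfs_matching_rev_unique[OF _ rev] by blast
  ultimately show ?thesis by blast
qed

end
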